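(* Consider a rooted tree in which every internal node has exactly two (ordered) children, and assign polynomials in $\mathbb{R}[x]$ to its nodes as follows: each leaf is assigned an arbitrary polynomial of degree $1$, and an internal node $v$ with children $u,w$ is assigned $p_v=p_u\oplus p_w:=p_u+p_w+(p_u-p_w)\,x^{2^{h(p_u-p_w)}}$. Then if the tree has $n$ nodes, every polynomial produced has degree at most $2\uparrow\uparrow O(\log n)$.
   Context: For a polynomial $p$, $h(p)=0$ if $x=0$ is not a root of $p$, and otherwise $h(p)$ is the multiplicity of the root $0$ (the lowest degree of a nonzero monomial of $p$). $2\uparrow\uparrow1=2$ and $2\uparrow\uparrow k=2^{2\uparrow\uparrow(k-1)}$; $\log$ base 2; $O(\cdot)$ hides an absolute constant. *)

theory Defs
  imports "HOL-Computational_Algebra.Polynomial" Complex_Main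
begin

datatype btree = Leaf "real poly" | Node btree btree

fun num_nodes :: "btree \<Rightarrow> nat" where
  "num_nodes (Leaf p) = 1"
| "num_nodes (Node l r) = Suc (num_nodes l + num_nodes r)"

fun leaves_deg1 :: "btree \<Rightarrow> bool" where
  "leaves_deg1 (Leaf p) = (degree p = 1)"
| "leaves_deg1 (Node l r) = (leaves_deg1 l \<and> leaves_deg1 r)"

definition hmult :: "real poly \<Rightarrow> nat" where
  "hmult p = order 0 p"

definition oplus :: "real poly \<Rightarrow> real poly \<Rightarrow> real poly" where
  "oplus p q = p + q + (p - q) * monom 1 (2 ^ hmult (p - q))"

fun tpoly :: "btree \<Rightarrow> real poly" where
  "tpoly (Leaf p) = p"
| "tpoly (Node l r) = oplus (tpoly l) (tpoly r)"

text \<open>Subtrees (including the tree itself): the nodes of the tree.\<close>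
fun subtrees :: "btree \<Rightarrow> btree set" where
  "subtrees (Leaf p) = {Leaf p}"
| "subtrees (Node l r) = insert (Node l r) (subtrees l \<union> subtrees r)"

fun tower :: "nat \<Rightarrow> nat" where
  "tower 0 = 1"
| "tower (Suc k) = 2 ^ tower k"

end

theory Submission
  imports Defs
begin

text \<open>
  Call h(p_u - p_w) the h-value of the internal node with children u, w. If every h-value of a
  subtree is below K, its polynomial has degree at most (number of nodes) * 2^K. If some h-value is at
  least K, then either two disjoint subtrees both contain such an h-value, or all of them lie on a
  single path from the root (a chain) whose side subtrees have polynomials of small degree t.

  Along a chain, write the polynomial as q and the side polynomial as r. By pigeonhole on the few
  h-values there is a window (\<theta>, \<theta> + L] containing none of them. Then q has no coefficients in a
  gap (B, 2^(\<theta> + L)), and if it has any nonzero coefficient above degree t, it has one of index at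
  most B; a step with h-value at most \<theta> moves B up by at most 2^\<theta>, and a step with h-value
  beyond the window shifts everything past the gap. Since r has degree at most t, this bounds h(q - r) by B. Hence an h-value
  beyond a tower of height 3j + 3 forces at least 2^j nodes, so a tree with n nodes only produces
  degrees below a tower of height O(log n).
\<close>

lemma coeff_less_order_0: "i < order 0 p \<Longrightarrow> p \<noteq> 0 \<Longrightarrow> coeff p i = 0"
  by (meson monom_1_dvd_iff monom_1_dvd_iff' order_refl)

lemma order_0_le_coeff: "coeff p i \<noteq> 0 \<Longrightarrow> order 0 p \<le> i"
  using coeff_less_order_0 by (metis coeff_0 leI)

lemma coeff_order_0: "p \<noteq> 0 \<Longrightarrow> coeff p (order 0 p) \<noteq> 0"
proof
  assume "p \<noteq> 0" "coeff p (order 0 p) = 0"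
  then have "\<forall>k<Suc (order 0 p). coeff p k = 0"
    using coeff_less_order_0 less_Suc_eq by auto
  then have "monom 1 (Suc (order 0 p)) dvd p"
    by (simp add: monom_1_dvd_iff')
  then show False
    using monom_1_dvd_iff[OF \<open>p \<noteq> 0\<close>] by simp
qed

lemma coeff_mult_monom_1:
  fixes p :: "'a::comm_semiring_1 poly"
  shows "coeff (p * monom 1 s) i = (if s \<le> i then coeff p (i - s) else 0)"
  by (simp add: mult.commute[of p] coeff_monom_mult)

definition gapped :: "nat \<Rightarrow> nat \<Rightarrow> nat \<Rightarrow> 'a::zero poly \<Rightarrow> bool" where
  "gapped t B M q \<longleftrightarrow> (\<forall>i. B < i \<longrightarrow> i < M \<longrightarrow> coeff q i = 0) \<and>
     (\<forall>i>t. coeff q i \<noteq> 0 \<longrightarrow> (\<exists>j. t < j \<and> j \<le> B \<and> coeff q j \<noteq> 0))"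

lemma gapped_if_degree_le: "degree q \<le> t \<Longrightarrow> t \<le> B \<Longrightarrow> gapped t B M q"
  by (simp add: gapped_def coeff_eq_0)

lemma gapped_mono: "gapped t B M q \<Longrightarrow> B \<le> B' \<Longrightarrow> gapped t B' M q"
  unfolding gapped_def by (meson le_less_trans order_trans)

lemma order_0_diff_le_if_gapped:
  fixes q r :: "'a::idom poly"
  assumes "gapped t B M q" "degree r \<le> t" "t \<le> B" "q \<noteq> r"
  shows "order 0 (q - r) \<le> B"
proof (cases "order 0 (q - r) \<le> t")
  case False
  then have "coeff q (order 0 (q - r)) \<noteq> 0"
    using coeff_order_0[of "q - r"] assms(2,4) by (simp add: coeff_eq_0)
  then obtain j where "t < j" "j \<le> B" "coeff q j \<noteq> 0"
    using assms(1) False unfolding gapped_def not_le by blast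
  then have "coeff (q - r) j \<noteq> 0"
    using assms(2) by (simp add: coeff_eq_0)
  then show ?thesis
    using order_0_le_coeff \<open>j \<le> B\<close> order_trans by blast
qed (use assms(3) in simp)

lemma gapped_top_coeff:
  assumes gap: "gapped t B M q" and "B < M" "t < i" "coeff q i \<noteq> 0"
  obtains D where "t < D" "D \<le> B" "coeff q D \<noteq> 0" "\<And>k. D < k \<Longrightarrow> k < M \<Longrightarrow> coeff q k = 0"
proof -
  define S where "S = {j. t < j \<and> j \<le> B \<and> coeff q j \<noteq> 0}"
  have "finite S"
    by (rule finite_subset[of _ "{..B}"]) (auto simp: S_def)
  moreover have "S \<noteq> {}"
    using gap assms(3,4) unfolding gapped_def S_def by blast
  ultimately have "Max S \<in> S"
    by (rule Max_in)
  moreover have "coeff q k = 0" if "Max S < k" "k < M" for k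
  proof (cases "k \<le> B")
    case True
    then have "k \<notin> S"
      using Max_ge[OF \<open>finite S\<close>, of k] \<open>Max S < k\<close> by auto
    then show ?thesis
      using True \<open>Max S \<in> S\<close> \<open>Max S < k\<close> unfolding S_def by auto
  qed (use gap that in \<open>auto simp: gapped_def\<close>)
  ultimately show thesis
    using that[of "Max S"] unfolding S_def by blast
qed

lemma gapped_small_shift:
  fixes q r :: "'a::idom poly"
  assumes gap: "gapped t B M q" and r: "degree r \<le> t"
    and "t \<le> B" "0 < s" "B + s \<le> B'" "B' < M" "\<sigma> \<noteq> 0"
  shows "gapped t B' M (q + r + smult \<sigma> ((q - r) * monom 1 s))" (is "gapped _ _ _ ?q")
proof -
  have r0: "coeff r i = 0" if "t < i" for i
    using r that by (simp add: coeff_eq_0)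
  have coeff_q: "coeff ?q i = coeff q i + coeff r i + \<sigma> * (if s \<le> i then coeff (q - r) (i - s) else 0)" for i
    by (simp add: coeff_mult_monom_1)
  have "coeff ?q i = 0" if "B' < i" "i < M" for i
  proof -
    have "B < i" "s \<le> i" "B < i - s" "i - s < M"
      using that assms(5) by auto
    then have "coeff q i = 0" "coeff q (i - s) = 0" "coeff r i = 0" "coeff r (i - s) = 0"
      using gap \<open>i < M\<close> r0 assms(3) unfolding gapped_def by auto
    then show ?thesis
      unfolding coeff_q by simp
  qed
  moreover have "\<exists>j. t < j \<and> j \<le> B' \<and> coeff ?q j \<noteq> 0" if "t < i" "coeff ?q i \<noteq> 0" for i
  proof (cases "\<exists>k>t. coeff q k \<noteq> 0")
    case True
    then obtain k where "t < k" "coeff q k \<noteq> 0"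
      by blast
    moreover have "B < M"
      using assms(5,6) by linarith
    ultimately obtain D where D: "t < D" "D \<le> B" "coeff q D \<noteq> 0"
      and above_D: "\<And>k. D < k \<Longrightarrow> k < M \<Longrightarrow> coeff q k = 0"
      using gapped_top_coeff[OF gap] by blast
    have "coeff q (D + s) = 0"
      using above_D assms(4-6) D(2) by simp
    \<comment> \<open>the topmost coefficient of q below the gap, shifted by s, survives\<close>
    then have "coeff ?q (D + s) = \<sigma> * coeff q D"
      using D r0 unfolding coeff_q by simp
    then show ?thesis
      using D assms(5,7) by (intro exI[of _ "D + s"]) auto
  next
    case False
    then have "s \<le> i" "coeff (q - r) (i - s) \<noteq> 0"
      using that r0 unfolding coeff_q by (auto split: if_splits)
    moreover have "coeff (q - r) j = 0" if "t < j" for j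
      using False r0 that by simp
    ultimately have "i \<le> t + s"
      by (metis le_diff_conv not_le)
    then show ?thesis
      using that assms(3,5) by (intro exI[of _ i]) auto
  qed
  ultimately show ?thesis
    unfolding gapped_def by blast
qed

lemma gapped_large_shift:
  fixes q r :: "'a::idom poly"
  assumes gap: "gapped t B M q" and r: "degree r \<le> t"
    and low: "\<forall>j\<le>t. coeff (q - r) j = 0" and "t \<le> B" "B < M" "M \<le> t + 1 + s"
  shows "gapped t B M (q + r + smult \<sigma> ((q - r) * monom 1 s))" (is "gapped _ _ _ ?q")
proof -
  have r0: "coeff r i = 0" if "t < i" for i
    using r that by (simp add: coeff_eq_0)
  have coeff_q: "coeff ?q i = coeff q i + coeff r i + \<sigma> * (if s \<le> i then coeff (q - r) (i - s) else 0)" for i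
    by (simp add: coeff_mult_monom_1)
  \<comment> \<open>below M the shifted term only sees coefficients of q - r of index at most t, which vanish\<close>
  have below_M: "coeff ?q i = coeff q i" if "t < i" "i < M" for i
  proof -
    have "coeff (q - r) (i - s) = 0" if "s \<le> i"
      using low \<open>i < M\<close> assms(6) by simp
    then show ?thesis
      unfolding coeff_q using r0 \<open>t < i\<close> by simp
  qed
  have "coeff ?q i = 0" if "B < i" "i < M" for i
  proof -
    have "coeff ?q i = coeff q i"
      using that assms(4) by (intro below_M) auto
    then show ?thesis
      using gap that unfolding gapped_def by simp
  qed
  moreover have "\<exists>j. t < j \<and> j \<le> B \<and> coeff ?q j \<noteq> 0" if "t < i" "coeff ?q i \<noteq> 0" for i
  proof -
    have "\<exists>k>t. coeff q k \<noteq> 0"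
    proof (cases "coeff q i = 0")
      case True
      then have "s \<le> i" "coeff (q - r) (i - s) \<noteq> 0"
        using that r0 unfolding coeff_q by (auto split: if_splits)
      moreover have "coeff (q - r) (i - s) = coeff q (i - s)" if "t < i - s"
        using r0 that by simp
      ultimately show ?thesis
        using low by (metis not_le)
    qed (use that in auto)
    then obtain j where "t < j" "j \<le> B" "coeff q j \<noteq> 0"
      using gap unfolding gapped_def by blast
    moreover have "coeff ?q j = coeff q j"
      using \<open>t < j\<close> \<open>j \<le> B\<close> assms(5) by (intro below_M) auto
    ultimately show ?thesis
      by metis
  qed
  ultimately show ?thesis
    unfolding gapped_def by blast
qed

definition signed_oplus :: "'a::idom \<Rightarrow> 'a poly \<Rightarrow> 'a poly \<Rightarrow> 'a poly" where
  "signed_oplus \<sigma> q r = q + r + smult \<sigma> ((q - r) * monom 1 (2 ^ order 0 (q - r)))"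

lemma hmult_commute: "hmult (p - q) = hmult (q - p)"
  by (metis hmult_def minus_diff_eq order_uminus)

lemma oplus_eq_signed_oplus:
  "oplus p q = signed_oplus 1 p q" "oplus p q = signed_oplus (-1) q p"
  using hmult_commute[of p q] by (simp_all add: oplus_def signed_oplus_def hmult_def algebra_simps)

lemma gapped_signed_oplus:
  fixes q r :: "'a::idom poly"
  assumes gap: "gapped t B M q" and r: "degree r \<le> t" and "\<sigma> \<noteq> 0"
    and "t \<le> \<theta>" "t \<le> B" "B + 2 ^ \<theta> \<le> B'" "B' < M" "M \<le> 2 ^ (\<theta> + L)"
    and window: "q \<noteq> r \<Longrightarrow> order 0 (q - r) \<notin> {\<theta><..\<theta> + L}"
  shows "gapped t B' M (signed_oplus \<sigma> q r)"
proof (cases "q = r")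
  case True
  then have "signed_oplus \<sigma> q r = r + r"
    by (simp add: signed_oplus_def)
  moreover have "gapped t B' M (r + r)"
    using r assms(5,6) by (intro gapped_if_degree_le degree_add_le) auto
  ultimately show ?thesis
    by simp
next
  case False
  define h where "h = order 0 (q - r)"
  show ?thesis
  proof (cases "h \<le> \<theta>")
    case True
    then have "(2::nat) ^ h \<le> 2 ^ \<theta>"
      by (intro power_increasing) auto
    then have "B + 2 ^ h \<le> B'"
      using assms(6) by linarith
    then show ?thesis
      using gapped_small_shift[OF gap r assms(5) _ _ assms(7,3)]
      unfolding signed_oplus_def h_def by simp
  next
    case False
    then have "\<theta> + L < h"
      using window \<open>q \<noteq> r\<close> unfolding h_def by auto
    have "\<forall>j\<le>t. coeff (q - r) j = 0"
    proof (intro allI impI)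
      fix j
      assume "j \<le> t"
      then have "j < order 0 (q - r)"
        using \<open>\<theta> + L < h\<close> assms(4) unfolding h_def by linarith
      then show "coeff (q - r) j = 0"
        using \<open>q \<noteq> r\<close> coeff_less_order_0[of j "q - r"] by simp
    qed
    moreover have "(2::nat) ^ (\<theta> + L) \<le> 2 ^ h"
      using \<open>\<theta> + L < h\<close> by (intro power_increasing) auto
    then have "M \<le> t + 1 + 2 ^ h"
      using assms(8) by linarith
    ultimately have "gapped t B M (signed_oplus \<sigma> q r)"
      using gapped_large_shift[OF gap r _ assms(5)] assms(6,7) unfolding signed_oplus_def h_def by simp
    then show ?thesis
      using gapped_mono assms(6) by fastforce
  qed
qed

lemma degree_oplus_le:
  "degree (oplus p q) \<le> max (degree p) (degree q) + (if p = q then 0 else 2 ^ hmult (p - q))"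
proof (cases "p = q")
  case False
  define m where "m = max (degree p) (degree q)"
  define s :: nat where "s = 2 ^ hmult (p - q)"
  have pq: "degree (p + q) \<le> m + s"
    using degree_add_le_max[of p q] unfolding m_def by linarith
  have "degree ((p - q) * monom 1 s) \<le> degree (p - q) + degree (monom 1 s :: real poly)"
    by (rule degree_mult_le)
  also have "\<dots> \<le> m + s"
    unfolding m_def by (intro add_mono degree_diff_le_max degree_monom_le)
  finally have "degree (p + q + (p - q) * monom 1 s) \<le> m + s"
    using pq by (intro degree_add_le[of "p + q"])
  then show ?thesis
    using False unfolding oplus_def m_def s_def by simp
next
  case True
  then show ?thesis
    using degree_add_le_max[of q q] by (simp add: oplus_def)
qed

fun hmults :: "btree \<Rightarrow> nat set" where
  "hmults (Leaf p) = {}"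
| "hmults (Node l r) =
     (if tpoly l = tpoly r then {} else {hmult (tpoly l - tpoly r)}) \<union> hmults l \<union> hmults r"

lemma finite_hmults: "finite (hmults T)"
  by (induction T) auto

lemma card_hmults_le: "card (hmults T) \<le> num_nodes T"
proof (induction T)
  case (Node l r)
  have "card (hmults (Node l r)) \<le> Suc (card (hmults l \<union> hmults r))"
    using finite_hmults by (simp add: card_insert_if)
  also have "\<dots> \<le> Suc (card (hmults l) + card (hmults r))"
    using card_Un_le by simp
  finally show ?case
    using Node by simp
qed simp

lemma hmults_subtree: "s \<in> subtrees T \<Longrightarrow> hmults s \<subseteq> hmults T"
  by (induction T) auto

lemma leaves_deg1_subtree: "s \<in> subtrees T \<Longrightarrow> leaves_deg1 T \<Longrightarrow> leaves_deg1 s"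
  by (induction T) auto

lemma num_nodes_subtree: "s \<in> subtrees T \<Longrightarrow> num_nodes s \<le> num_nodes T"
  by (induction T) auto

lemma num_nodes_pos: "0 < num_nodes T"
  by (cases T) auto

lemma degree_tpoly_le:
  "leaves_deg1 T \<Longrightarrow> hmults T \<subseteq> {..<K} \<Longrightarrow> degree (tpoly T) \<le> num_nodes T * 2 ^ K"
proof (induction T)
  case (Node l r)
  have "max (degree (tpoly l)) (degree (tpoly r)) \<le> num_nodes l * 2 ^ K + num_nodes r * 2 ^ K"
    using Node by simp
  moreover have "(if tpoly l = tpoly r then 0 else 2 ^ hmult (tpoly l - tpoly r)) \<le> (2::nat) ^ K"
    using Node.prems(2) by (auto split: if_splits)
  ultimately have "degree (tpoly (Node l r)) \<le> num_nodes l * 2 ^ K + num_nodes r * 2 ^ K + 2 ^ K"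
    using degree_oplus_le[of "tpoly l" "tpoly r"] unfolding tpoly.simps by linarith
  then show ?case
    by (simp add: algebra_simps)
qed simp

fun chain :: "nat \<Rightarrow> btree \<Rightarrow> bool" where
  "chain K (Leaf p) = True"
| "chain K (Node l r) =
     (hmults l \<subseteq> {..<K} \<and> chain K r \<or> hmults r \<subseteq> {..<K} \<and> chain K l)"

lemma chain_NodeE:
  assumes "chain K (Node l r)"
  obtains c d and \<sigma> :: real where "c = l \<and> d = r \<or> c = r \<and> d = l"
    "chain K c" "hmults d \<subseteq> {..<K}" "\<sigma> \<noteq> 0"
    "tpoly (Node l r) = signed_oplus \<sigma> (tpoly c) (tpoly d)"
    "hmults (Node l r) =
       (if tpoly c = tpoly d then {} else {hmult (tpoly c - tpoly d)}) \<union> hmults c \<union> hmults d"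
proof -
  consider "hmults l \<subseteq> {..<K}" "chain K r" | "hmults r \<subseteq> {..<K}" "chain K l"
    using assms by auto
  then show thesis
  proof cases
    case 1
    then show thesis
      using that[of r l "-1"] oplus_eq_signed_oplus(2) hmult_commute[of "tpoly l" "tpoly r"]
      by (auto simp: Un_ac)
  next
    case 2
    then show thesis
      using that[of l r 1] oplus_eq_signed_oplus(1) by simp
  qed
qed

lemma not_chain_two_children:
  "\<not> chain K T \<Longrightarrow>
     \<exists>l r. Node l r \<in> subtrees T \<and> \<not> hmults l \<subseteq> {..<K} \<and> \<not> hmults r \<subseteq> {..<K}"
  by (induction T) auto

lemma gapped_chain_Node:
  fixes \<sigma> :: real
  assumes tpoly_T: "tpoly T = signed_oplus \<sigma> (tpoly c) (tpoly d)" and "\<sigma> \<noteq> 0"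
    and hmults_T: "hmults T =
       (if tpoly c = tpoly d then {} else {hmult (tpoly c - tpoly d)}) \<union> hmults c \<union> hmults d"
    and nodes: "num_nodes T = Suc (num_nodes c + num_nodes d)"
    and d: "leaves_deg1 d" "hmults d \<subseteq> {..<K}"
    and "num_nodes T * 2 ^ K \<le> t" "t \<le> \<theta>" "t + num_nodes T * 2 ^ \<theta> < 2 ^ (\<theta> + L)"
    and window: "hmults T \<inter> {\<theta><..\<theta> + L} = {}"
    and IH: "gapped t (t + num_nodes c * 2 ^ \<theta>) (2 ^ (\<theta> + L)) (tpoly c)"
      "hmults c \<subseteq> {..t + num_nodes c * 2 ^ \<theta>}"
  shows "gapped t (t + num_nodes T * 2 ^ \<theta>) (2 ^ (\<theta> + L)) (tpoly T) \<and>
    hmults T \<subseteq> {..t + num_nodes T * 2 ^ \<theta>}"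
proof -
  define B where "B = t + num_nodes c * 2 ^ \<theta>"
  define B' where "B' = t + num_nodes T * 2 ^ \<theta>"
  have B_B': "B + 2 ^ \<theta> \<le> B'"
    unfolding B_def B'_def nodes by simp
  have "K < 2 ^ K"
    by (rule less_exp)
  also have "\<dots> \<le> num_nodes T * 2 ^ K"
    using nodes by simp
  finally have "K \<le> t"
    using assms(7) by linarith
  have "degree (tpoly d) \<le> num_nodes d * 2 ^ K"
    using d by (rule degree_tpoly_le)
  also have "\<dots> \<le> num_nodes T * 2 ^ K"
    using nodes by (simp add: algebra_simps)
  finally have deg_d: "degree (tpoly d) \<le> t"
    using assms(7) by linarith
  have "order 0 (tpoly c - tpoly d) \<notin> {\<theta><..\<theta> + L}" if "tpoly c \<noteq> tpoly d"
    using window that unfolding hmults_T hmult_def by auto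
  then have "gapped t B' (2 ^ (\<theta> + L)) (tpoly T)"
    unfolding tpoly_T using IH(1) deg_d \<open>\<sigma> \<noteq> 0\<close> assms(8,9) B_B'
    by (intro gapped_signed_oplus[where \<theta> = \<theta> and B = B]) (auto simp: B_def B'_def)
  moreover have "hmult (tpoly c - tpoly d) \<le> B" if "tpoly c \<noteq> tpoly d"
    using order_0_diff_le_if_gapped[OF IH(1) deg_d] that unfolding hmult_def B_def by simp
  then have "(if tpoly c = tpoly d then {} else {hmult (tpoly c - tpoly d)}) \<subseteq> {..B'}"
    using B_B' by auto
  moreover have "hmults c \<subseteq> {..B'}" "hmults d \<subseteq> {..B'}"
    using IH(2) d(2) B_B' \<open>K \<le> t\<close> unfolding B_def B'_def by auto
  ultimately show ?thesis
    unfolding hmults_T B'_def by blast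
qed

lemma chain_gapped:
  assumes "num_nodes T * 2 ^ K \<le> t" "t \<le> \<theta>" "t + num_nodes T * 2 ^ \<theta> < 2 ^ (\<theta> + L)"
    and "leaves_deg1 T" "chain K T" "hmults T \<inter> {\<theta><..\<theta> + L} = {}"
  shows "gapped t (t + num_nodes T * 2 ^ \<theta>) (2 ^ (\<theta> + L)) (tpoly T) \<and>
    hmults T \<subseteq> {..t + num_nodes T * 2 ^ \<theta>}"
  using assms
proof (induction T)
  case (Leaf p)
  have "(1::nat) \<le> 2 ^ K" "2 ^ K \<le> t"
    using Leaf.prems(1) by simp_all
  moreover have "degree p = 1"
    using Leaf.prems(4) by simp
  ultimately have "degree p \<le> t"
    by linarith
  then show ?case
    by (simp add: gapped_if_degree_le)
next
  case (Node l r)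
  obtain c d and \<sigma> :: real where cd: "c = l \<and> d = r \<or> c = r \<and> d = l"
    "chain K c" "hmults d \<subseteq> {..<K}" "\<sigma> \<noteq> 0"
    "tpoly (Node l r) = signed_oplus \<sigma> (tpoly c) (tpoly d)"
    "hmults (Node l r) =
       (if tpoly c = tpoly d then {} else {hmult (tpoly c - tpoly d)}) \<union> hmults c \<union> hmults d"
    using chain_NodeE[OF \<open>chain K (Node l r)\<close>] by blast
  have nodes: "num_nodes (Node l r) = Suc (num_nodes c + num_nodes d)"
    and "leaves_deg1 c" "leaves_deg1 d"
    using cd(1) Node.prems(4) by auto
  then have "num_nodes c \<le> num_nodes (Node l r)"
    by simp
  then have "num_nodes c * 2 ^ K \<le> t" "t + num_nodes c * 2 ^ \<theta> < 2 ^ (\<theta> + L)"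
    using Node.prems(1,3) mult_le_mono1[of "num_nodes c" _ "2 ^ K"] mult_le_mono1[of "num_nodes c" _ "2 ^ \<theta>"]
    by (meson le_less_trans le_trans add_left_mono)+
  moreover have "hmults c \<inter> {\<theta><..\<theta> + L} = {}"
    using Node.prems(6) cd(6) by auto
  note c_hyps = calculation this \<open>leaves_deg1 c\<close> cd(2) Node.prems(2)
  have "gapped t (t + num_nodes c * 2 ^ \<theta>) (2 ^ (\<theta> + L)) (tpoly c) \<and>
    hmults c \<subseteq> {..t + num_nodes c * 2 ^ \<theta>}"
    using cd(1)
  proof
    assume "c = l \<and> d = r"
    then show ?thesis
      using Node.IH(1) c_hyps by simp
  next
    assume "c = r \<and> d = l"
    then show ?thesis
      using Node.IH(2) c_hyps by simp
  qed
  then show ?case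
    using gapped_chain_Node[OF cd(5,4,6) nodes \<open>leaves_deg1 d\<close> cd(3)] Node.prems(1-3,6) by blast
qed

lemma interval_disjoint_from_finite_set:
  fixes H :: "nat set"
  assumes "finite H" "card H \<le> N" "0 < L"
  shows "\<exists>i\<le>N. H \<inter> {t + i * L<..t + i * L + L} = {}"
proof (rule ccontr)
  assume contra: "\<not> ?thesis"
  \<comment> \<open>the N + 1 disjoint intervals would each contain a different element of H\<close>
  have "{..N} \<subseteq> (\<lambda>h. (h - t - 1) div L) ` H"
  proof
    fix i
    assume "i \<in> {..N}"
    then have "H \<inter> {t + i * L<..t + i * L + L} \<noteq> {}"
      using contra by auto
    then obtain h where "h \<in> H" "t + i * L < h" "h \<le> t + i * L + L"
      by auto
    then have "(h - t - 1) div L = i"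
      by (intro div_nat_eqI) (auto simp: algebra_simps)
    then show "i \<in> (\<lambda>h. (h - t - 1) div L) ` H"
      using \<open>h \<in> H\<close> by force
  qed
  then have "card {..N} \<le> card H"
    using assms(1) by (meson card_image_le card_mono finite_imageI le_trans)
  then show False
    using assms(2) by simp
qed

text \<open>The chain invariant's bound t + N * 2 ^ \<theta> for the side degree t = N * 2 ^ K and the largest
  window start \<theta> = t + N * (N + 1) that the pigeonhole argument may produce.\<close>
definition chain_bound :: "nat \<Rightarrow> nat \<Rightarrow> nat" where
  "chain_bound K N = N * 2 ^ K + N * 2 ^ (N * 2 ^ K + N * (N + 1))"

lemma hmults_chain_le:
  assumes "leaves_deg1 T" "chain K T"
  shows "hmults T \<subseteq> {..chain_bound K (num_nodes T)}"
proof -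
  define N where "N = num_nodes T"
  define t where "t = N * 2 ^ K"
  define L where "L = N + 1"
  obtain i where "i \<le> N" and window: "hmults T \<inter> {t + i * L<..t + i * L + L} = {}"
    using interval_disjoint_from_finite_set[OF finite_hmults card_hmults_le[of T], of L t]
    unfolding N_def L_def by auto
  define \<theta> where "\<theta> = t + i * L"
  have "t < 2 ^ t"
    by (rule less_exp)
  also have "(2::nat) ^ t \<le> 2 ^ \<theta>"
    unfolding \<theta>_def by (rule power_increasing) simp_all
  finally have "t + N * 2 ^ \<theta> < (N + 1) * 2 ^ \<theta>"
    by simp
  also have "\<dots> \<le> 2 ^ L * 2 ^ \<theta>"
    using less_exp[of L] unfolding L_def by (intro mult_le_mono1) simp
  finally have "t + N * 2 ^ \<theta> < 2 ^ (\<theta> + L)"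
    by (simp add: power_add mult.commute)
  then have "hmults T \<subseteq> {..t + N * 2 ^ \<theta>}"
    using chain_gapped[of T K t \<theta> L] assms window unfolding N_def t_def \<theta>_def by simp
  moreover have "\<theta> \<le> t + N * (N + 1)"
    using mult_le_mono1[OF \<open>i \<le> N\<close>, of L] unfolding \<theta>_def L_def by simp
  then have "t + N * 2 ^ \<theta> \<le> chain_bound K N"
    unfolding chain_bound_def t_def by simp
  ultimately show ?thesis
    unfolding N_def by auto
qed

lemma linear_le_power_2: "3 \<le> k \<Longrightarrow> 2 * k + 2 \<le> (2::nat) ^ k"
  by (induction k rule: dec_induct) simp_all

lemma chain_bound_less:
  assumes "K \<le> T" "N \<le> T" "3 \<le> T"
  shows "chain_bound K N < 2 ^ 2 ^ 2 ^ T"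
proof -
  define a :: nat where "a = 2 ^ T"
  define E where "E = T * a + T * (T + 1)"
  have "T < a"
    unfolding a_def by (rule less_exp)
  then have Ta: "T * a < a * a" "T * (T + 1) \<le> a * a"
    by (simp, intro mult_le_mono) auto
  have "chain_bound K N \<le> chain_bound T T"
    unfolding chain_bound_def using assms(1,2)
    by (intro add_mono mult_mono power_increasing) auto
  also have "\<dots> = T * a + T * 2 ^ E"
    unfolding chain_bound_def a_def E_def ..
  also have "\<dots> < 2 ^ (T + E) + 2 ^ (T + E)"
  proof -
    have "a * a \<le> 2 ^ (T + E)"
      unfolding E_def a_def by (simp add: power_add)
    moreover have "T * 2 ^ E < 2 ^ (T + E)"
      using \<open>T < a\<close> unfolding a_def by (simp add: power_add)
    ultimately show ?thesis
      using Ta(1) by linarith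
  qed
  also have "\<dots> = 2 ^ (T + E + 1)"
    by simp
  also have "\<dots> \<le> 2 ^ 2 ^ 2 ^ T"
  proof (intro power_increasing)
    have "E < 2 * (a * a)"
      using Ta unfolding E_def by linarith
    also have "a * a = 2 ^ (2 * T)"
      unfolding a_def by (simp add: power_mult_distrib mult_2 power_add)
    moreover have "a \<le> 2 ^ (2 * T)"
      unfolding a_def by (intro power_increasing) auto
    ultimately have "T + E + 1 \<le> 2 ^ (2 * T + 2)"
      using \<open>T < a\<close> by simp
    also have "\<dots> \<le> 2 ^ 2 ^ T"
      using linear_le_power_2[OF assms(3)] by (intro power_increasing) auto
    finally show "T + E + 1 \<le> 2 ^ 2 ^ T" .
  qed simp
  finally show ?thesis .
qed

lemma less_tower: "k < tower k"
proof (induction k)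
  case (Suc k)
  moreover have "tower k < 2 ^ tower k"
    by (rule less_exp)
  ultimately show ?case
    unfolding tower.simps by linarith
qed simp

lemma tower_mono: "m \<le> n \<Longrightarrow> tower m \<le> tower n"
  by (rule lift_Suc_mono_le[of tower]) (simp_all add: less_imp_le less_exp)

lemma power_2_le_tower: "2 ^ Suc j \<le> tower (3 * j + 3)"
proof -
  have "Suc j \<le> tower (3 * j + 2)"
    using less_tower[of "3 * j + 2"] by simp
  then have "(2::nat) ^ Suc j \<le> 2 ^ tower (3 * j + 2)"
    by (rule power_increasing) simp
  also have "\<dots> = tower (3 * j + 3)"
    by (simp add: numeral_eq_Suc)
  finally show ?thesis .
qed

lemma num_nodes_ge_if_not_hmults_less_tower:
  "leaves_deg1 T \<Longrightarrow> \<not> hmults T \<subseteq> {..<tower (3 * j + 3)} \<Longrightarrow> 2 ^ j \<le> num_nodes T"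
proof (induction j arbitrary: T)
  case 0
  then show ?case
    using num_nodes_pos by (simp add: Suc_le_eq)
next
  case (Suc j)
  define K where "K = tower (3 * j + 3)"
  show ?case
  proof (rule ccontr)
    assume small: "\<not> 2 ^ Suc j \<le> num_nodes T"
    show False
    proof (cases "chain K T")
      case True
      have "num_nodes T \<le> K" "3 \<le> K"
        using small power_2_le_tower[of j] tower_mono[of 2 "3 * j + 3"] unfolding K_def
        by (simp_all add: numeral_eq_Suc)
      then have "chain_bound K (num_nodes T) < tower (3 * Suc j + 3)"
        using chain_bound_less[of K K "num_nodes T"] unfolding K_def by (simp add: numeral_eq_Suc)
      then show False
        using hmults_chain_le[OF Suc.prems(1) True] Suc.prems(2) by auto
    next
      case False
      then obtain l r where lr: "Node l r \<in> subtrees T"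
        "\<not> hmults l \<subseteq> {..<K}" "\<not> hmults r \<subseteq> {..<K}"
        using not_chain_two_children by blast
      then have "leaves_deg1 l" "leaves_deg1 r"
        using leaves_deg1_subtree[OF lr(1) Suc.prems(1)] by auto
      then have "2 ^ j \<le> num_nodes l" "2 ^ j \<le> num_nodes r"
        using Suc.IH lr(2,3) unfolding K_def by auto
      then show False
        using num_nodes_subtree[OF lr(1)] small by simp
    qed
  qed
qed

lemma degree_tpoly_le_tower:
  assumes "leaves_deg1 T" "s \<in> subtrees T" "num_nodes T < 2 ^ Suc j"
  shows "degree (tpoly s) \<le> tower (3 * j + 8)"
proof -
  define K where "K = tower (3 * j + 6)"
  have "hmults s \<subseteq> {..<K}"
    using num_nodes_ge_if_not_hmults_less_tower[OF assms(1), of "Suc j"] assms(3)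
      hmults_subtree[OF assms(2)] unfolding K_def by (auto simp: algebra_simps)
  then have "degree (tpoly s) \<le> num_nodes s * 2 ^ K"
    using leaves_deg1_subtree[OF assms(2,1)] by (rule degree_tpoly_le[rotated])
  also have "\<dots> \<le> K * 2 ^ K"
  proof -
    have "2 ^ Suc j \<le> K"
      using power_2_le_tower[of j] tower_mono[of "3 * j + 3" "3 * j + 6"] unfolding K_def by simp
    then show ?thesis
      using num_nodes_subtree[OF assms(2)] assms(3) by simp
  qed
  also have "\<dots> \<le> 2 ^ K * 2 ^ K"
    using less_exp[of K] by simp
  also have "\<dots> \<le> 2 ^ 2 ^ K"
  proof -
    have "3 \<le> K"
      using tower_mono[of 2 "3 * j + 6"] unfolding K_def by (simp add: numeral_eq_Suc)
    then have "K + K \<le> 2 ^ K"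
      using linear_le_power_2 by fastforce
    then show ?thesis
      by (simp add: power_add[symmetric])
  qed
  also have "\<dots> = tower (3 * j + 8)"
    unfolding K_def by (simp add: numeral_eq_Suc)
  finally show ?thesis .
qed

theorem theorem3p25:
  "\<exists>C::real. \<forall>t. leaves_deg1 t \<longrightarrow> (\<forall>s \<in> subtrees t.
      degree (tpoly s) \<le> tower (nat \<lceil>C * log 2 (real (num_nodes t))\<rceil>))"
proof (intro exI[of _ 11] allI impI ballI)
  fix t s
  assume t: "leaves_deg1 t" and s: "s \<in> subtrees t"
  show "degree (tpoly s) \<le> tower (nat \<lceil>11 * log 2 (real (num_nodes t))\<rceil>)"
  proof (cases t)
    case (Leaf p)
    then show ?thesis
      using t s tower_mono[of 0] by simp
  next
    case (Node l r)
    then have "2 \<le> num_nodes t"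
      using num_nodes_pos[of l] num_nodes_pos[of r] by simp
    then obtain j where j: "2 ^ j \<le> num_nodes t" "num_nodes t < 2 ^ Suc j"
      using ex_power_ivl1[of 2 "num_nodes t"] by auto
    then have "1 \<le> j"
      using \<open>2 \<le> num_nodes t\<close> by (cases j) auto
    have "real (3 * j + 8) \<le> 11 * log 2 (real (num_nodes t))"
      using le_log2_of_power[OF j(1)] \<open>1 \<le> j\<close> by simp
    then have "3 * j + 8 \<le> nat \<lceil>11 * log 2 (real (num_nodes t))\<rceil>"
      by linarith
    then show ?thesis
      using degree_tpoly_le_tower[OF t s j(2)] tower_mono le_trans by blast
  qed
qed

end
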